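(* Consider the single-input single-output discrete-time closed-loop setting described in the context, fix $N$ finite and a DFT frequency $\omega_\ell$ at which $S(e^{j\omega_\ell})R(e^{j\omega_\ell})\neq 0$. Then, as $\sigma\to 0$ (Case 1, one experiment), \[ \sigma^{-1}(\widehat G_{\mathrm{dir}} - G) \leadsto \frac{1}{SR}\big(\bar V_y - G\bar V_u\big),\qquad \sigma^{-1}(\widehat G_{\mathrm{ind}} - G) \leadsto \frac{1}{S^2R}\bar V_y, \] where $\bar V_y,\bar V_u$ are zero-mean (statistically dependent) complex random variables with finite variances; and (Case 2, two independent experiments) \[ \sigma^{-1}(\widehat{\widehat G}_{\mathrm{io}} - G) \leadsto \frac{1}{SR}\big(\bar V_y^{(1)} - G\bar V_u^{(2)}\big), \] where $\bar V_y^{(1)}$ is independent of $\bar V_u^{(2)}$. Here $\leadsto$ denotes convergence in distribution.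
   Context: Setting: unit sample time, $\mathrm{q}$ the forward shift operator. Plant $G(\mathrm{q})$ and controller $C(\mathrm{q})$ are linear time-invariant and the closed-loop system is stable; $S = 1/(1+GC)$. Noise $v(k) = H(\mathrm{q})e(k)$ with $H$ a stable spectral factor, and $e(k) = \sigma\bar e(k)$ with $\bar e$ a zero-mean unit-variance white process whose distribution does not depend on $\sigma>0$. Reference $r(k)=r_2(k)+C(\mathrm{q})r_1(k)$ ($r_1,r_2$ known exogenous signals), $r$ periodic with period $N$. Plant output and input satisfy $y = SGr + Sv$, $u = Sr - SCv$. The data set $\{(r_k,u_k,y_k)\}_{k=0}^{N-1}$ is collected in steady state, consists of one period of $r$, and all records are time-synchronized with $r$. The $N$-point DFT is $X(e^{j\omega_\ell}) = N^{-1/2}\sum_{k=0}^{N-1}x_ke^{-j\omega_\ell k}$, $\omega_\ell=2\pi\ell/N$. At the fixed frequency, $G,S,C$ denote transfer function values at $e^{j\omega_\ell}$ and $R,U,Y$ the DFTs of $r,u,y$. The noise contributions $V_y,V_u$ are defined by $Y = SGR + V_y$, $U = SR + V_u$; they are linear in the noise and hence $\bar V_y := V_y/\sigma$, $\bar V_u := V_u/\sigma$ have distributions independent of $\sigma$. Estimators: $\widehat G_{\mathrm{dir}} := Y/U$; with $\widehat T_{yr} := Y/R$, $\widehat G_{\mathrm{ind}} := \widehat T_{yr}/(1-\widehat T_{yr}C)$. For Case 2, a second independent experiment with the same excitation $r$ is performed (identical deterministic parts, independent noise); $Y^{(1)}$ is the output DFT of experiment 1 with normalized noise contribution $\bar V_y^{(1)}$,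 $U^{(2)}$ the input DFT of experiment 2 with normalized noise contribution $\bar V_u^{(2)}$, and $\widehat{\widehat G}_{\mathrm{io}} := \dfrac{Y^{(1)}/R}{U^{(2)}/R}$. *)

theory Defs
  imports "HOL-Probability.Probability"
begin

text \<open>Estimators at a fixed DFT frequency (all quantities are complex numbers).\<close>

definition G_dir :: "complex \<Rightarrow> complex \<Rightarrow> complex" where
  "G_dir Y U = Y / U"

definition T_yr :: "complex \<Rightarrow> complex \<Rightarrow> complex" where
  "T_yr Y R = Y / R"

definition G_ind :: "complex \<Rightarrow> complex \<Rightarrow> complex \<Rightarrow> complex" where
  "G_ind C Y R = T_yr Y R / (1 - T_yr Y R * C)"

definition G_io :: "complex \<Rightarrow> complex \<Rightarrow> complex \<Rightarrow> complex" where
  "G_io Y1 U2 R = (Y1 / R) / (U2 / R)"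

definition conv_distr_at_0 :: "(real \<Rightarrow> complex measure) \<Rightarrow> complex measure \<Rightarrow> bool" where
  "conv_distr_at_0 \<mu> \<nu> \<longleftrightarrow>
     (\<forall>f :: complex \<Rightarrow> real. continuous_on UNIV f \<and> bounded (range f) \<longrightarrow>
        ((\<lambda>\<sigma>. \<integral>x. f x \<partial>(\<mu> \<sigma>)) \<longlongrightarrow> (\<integral>x. f x \<partial>\<nu>)) (at_right 0))"

end

theory Submission
  imports Defs
begin

text \<open>All three estimators are deterministic functions of the noise, and after the
  scaling by \<open>\<sigma>\<^sup>-\<^sup>1\<close> each error is, sample by sample, a difference quotient of a rational
  function of \<open>\<sigma>\<close> that converges as \<open>\<sigma> \<rightarrow> 0\<close>. Almost sure convergence implies convergence
  in distribution (dominated convergence for bounded continuous test functions).\<close>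

lemma conv_distr_at_0_AE_tendsto:
  fixes Z :: "real \<Rightarrow> 'a \<Rightarrow> complex"
  assumes "prob_space M"
    and Z_meas: "\<And>\<sigma>. Z \<sigma> \<in> borel_measurable M" and Z0_meas: "Z0 \<in> borel_measurable M"
    and lim: "AE x in M. ((\<lambda>\<sigma>. Z \<sigma> x) \<longlongrightarrow> Z0 x) (at_right 0)"
  shows "conv_distr_at_0 (\<lambda>\<sigma>. distr M borel (Z \<sigma>)) (distr M borel Z0)"
  unfolding conv_distr_at_0_def
proof (intro allI impI)
  fix f :: "complex \<Rightarrow> real"
  assume f: "continuous_on UNIV f \<and> bounded (range f)"
  then obtain B where B: "\<And>z. norm (f z) \<le> B"
    by (auto simp: bounded_iff)
  have f_meas: "f \<in> borel_measurable borel"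
    using f by (intro borel_measurable_continuous_onI) auto
  \<comment> \<open>dominated convergence is available along \<open>at_top\<close>; \<open>t = 1 / \<sigma>\<close> transfers it to \<open>at_right 0\<close>\<close>
  have "((\<lambda>t. \<integral>x. f (Z (inverse t) x) \<partial>M) \<longlongrightarrow> (\<integral>x. f (Z0 x) \<partial>M)) at_top"
  proof (rule integral_dominated_convergence_at_top[where w = "\<lambda>_. B"])
    show "(\<lambda>x. f (Z0 x)) \<in> borel_measurable M"
      using f_meas Z0_meas by measurable
    show "(\<lambda>x. f (Z (inverse t) x)) \<in> borel_measurable M" for t
      using f_meas Z_meas by measurable
    show "integrable M (\<lambda>_. B)"
      using \<open>prob_space M\<close> by (simp add: prob_space.finite_measure finite_measure.integrable_const)
    show "AE x in M. ((\<lambda>t. f (Z (inverse t) x)) \<longlongrightarrow> f (Z0 x)) at_top"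
      using lim
    proof eventually_elim
      case (elim x)
      have "((\<lambda>t. Z (inverse t) x) \<longlongrightarrow> Z0 x) at_top"
        using elim by (simp add: filterlim_at_right_to_top)
      moreover have "isCont f (Z0 x)"
        using f by (simp add: continuous_on_eq_continuous_at)
      ultimately show ?case
        by (rule isCont_tendsto_compose[rotated])
    qed
    show "\<forall>\<^sub>F t in at_top. AE x in M. norm (f (Z (inverse t) x)) \<le> B"
      using B by auto
  qed
  then show "((\<lambda>\<sigma>. \<integral>z. f z \<partial>distr M borel (Z \<sigma>)) \<longlongrightarrow> (\<integral>z. f z \<partial>distr M borel Z0)) (at_right 0)"
    by (simp add: integral_distr[OF Z_meas f_meas] integral_distr[OF Z0_meas f_meas]
        filterlim_at_right_to_top)
qed

lemma perturbed_quotient_error_eq: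
  fixes a g y u :: "'a::field"
  assumes "a + s * u \<noteq> 0"
  shows "(a * g + s * y) / (a + s * u) - g = s * (y - g * u) / (a + s * u)"
  using assms by (simp add: field_simps)

lemma tendsto_perturbed_quotient_error:
  fixes a g y u :: "'a::real_normed_field"
  assumes "a \<noteq> 0"
  shows "((\<lambda>\<sigma>::real. ((a * g + of_real \<sigma> * y) / (a + of_real \<sigma> * u) - g) / of_real \<sigma>)
           \<longlongrightarrow> (y - g * u) / a) (at 0)"
proof -
  have "((\<lambda>\<sigma>::real. a + of_real \<sigma> * u) \<longlongrightarrow> a) (at 0)"
    by (auto intro!: tendsto_eq_intros)
  then have denom_nz: "\<forall>\<^sub>F \<sigma> in at 0. a + of_real \<sigma> * u \<noteq> 0"
    using assms by (rule tendsto_imp_eventually_ne)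
  have lim: "((\<lambda>\<sigma>::real. (y - g * u) / (a + of_real \<sigma> * u)) \<longlongrightarrow> (y - g * u) / a) (at 0)"
    using assms by (auto intro!: tendsto_eq_intros)
  show ?thesis
  proof (rule Lim_transform_eventually[OF lim])
    show "\<forall>\<^sub>F \<sigma> in at 0. (y - g * u) / (a + of_real \<sigma> * u)
            = ((a * g + of_real \<sigma> * y) / (a + of_real \<sigma> * u) - g) / of_real \<sigma>"
      using denom_nz eventually_neq_at_within[of 0 0 UNIV]
    proof eventually_elim
      case (elim \<sigma>)
      then show ?case
        by (simp add: perturbed_quotient_error_eq)
    qed
  qed
qed

lemma G_io_eq_G_dir: "R \<noteq> 0 \<Longrightarrow> G_io Y U R = G_dir Y U"
  by (simp add: G_io_def G_dir_def)

lemma G_ind_eq: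
  assumes "R \<noteq> 0"
  shows "G_ind C Y R = Y / (R - Y * C)"
proof -
  have "1 - Y / R * C = (R - Y * C) / R"
    using assms by (simp add: field_simps)
  with assms show ?thesis
    by (simp add: G_ind_def T_yr_def)
qed

lemma G_ind_perturbed:
  fixes S G C R y :: complex
  assumes S_def: "S = 1 / (1 + G * C)" and SR_nz: "S * R \<noteq> 0"
  shows "G_ind C (S * G * R + s * y) R = ((S * R) * G + s * y) / (S * R + s * (- y * C))"
proof -
  have "1 + G * C \<noteq> 0"
    using assms by auto
  then have "1 - S * G * C = S"
    using S_def by (simp add: field_simps)
  have "R - (S * G * R + s * y) * C = R * (1 - S * G * C) - s * y * C"
    by (simp add: algebra_simps)
  also have "\<dots> = S * R + s * (- y * C)"
    using \<open>1 - S * G * C = S\<close> by simp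
  finally show ?thesis
    using SR_nz by (simp add: G_ind_eq mult.commute mult.left_commute)
qed

theorem lemma1:
  fixes M :: "'a measure"
    and G C R S :: complex
    and Vy Vu Vy1 Vu2 :: "'a \<Rightarrow> complex"
  assumes prob: "prob_space M"
    and S_def: "S = 1 / (1 + G * C)"
    and SR_nz: "S * R \<noteq> 0"
    and meas: "Vy \<in> borel_measurable M" "Vu \<in> borel_measurable M"
              "Vy1 \<in> borel_measurable M" "Vu2 \<in> borel_measurable M"
    and zero_mean: "integral\<^sup>L M Vy = 0" "integral\<^sup>L M Vu = 0"
                   "integral\<^sup>L M Vy1 = 0" "integral\<^sup>L M Vu2 = 0"
    and fin_var: "integrable M (\<lambda>x. (cmod (Vy x))\<^sup>2)" "integrable M (\<lambda>x. (cmod (Vu x))\<^sup>2)"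
                 "integrable M (\<lambda>x. (cmod (Vy1 x))\<^sup>2)" "integrable M (\<lambda>x. (cmod (Vu2 x))\<^sup>2)"
    and indep: "prob_space.indep_var M borel Vy1 borel Vu2"
  shows
    "conv_distr_at_0
       (\<lambda>\<sigma>. distr M borel (\<lambda>x.
          (G_dir (S * G * R + complex_of_real \<sigma> * Vy x) (S * R + complex_of_real \<sigma> * Vu x) - G)
            / complex_of_real \<sigma>))
       (distr M borel (\<lambda>x. (Vy x - G * Vu x) / (S * R)))
   \<and> conv_distr_at_0
       (\<lambda>\<sigma>. distr M borel (\<lambda>x.
          (G_ind C (S * G * R + complex_of_real \<sigma> * Vy x) R - G) / complex_of_real \<sigma>))
       (distr M borel (\<lambda>x. Vy x / (S\<^sup>2 * R)))
   \<and> conv_distr_at_0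
       (\<lambda>\<sigma>. distr M borel (\<lambda>x.
          (G_io (S * G * R + complex_of_real \<sigma> * Vy1 x) (S * R + complex_of_real \<sigma> * Vu2 x) R - G)
            / complex_of_real \<sigma>))
       (distr M borel (\<lambda>x. (Vy1 x - G * Vu2 x) / (S * R)))"
proof -
  have S_nz: "S \<noteq> 0" and R_nz: "R \<noteq> 0"
    using SR_nz by auto
  have dir: "((\<lambda>\<sigma>::real. (G_dir (S * G * R + of_real \<sigma> * y) (S * R + of_real \<sigma> * u) - G)
               / of_real \<sigma>) \<longlongrightarrow> (y - G * u) / (S * R)) (at_right 0)" for y u
    using tendsto_mono[OF at_within_le_at tendsto_perturbed_quotient_error[OF SR_nz, of G y u]]
    by (simp add: G_dir_def mult_ac)
  have ind: "((\<lambda>\<sigma>::real. (G_ind C (S * G * R + of_real \<sigma> * y) R - G) / of_real \<sigma>)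
               \<longlongrightarrow> y / (S\<^sup>2 * R)) (at_right 0)" for y
  proof -
    have "1 + G * C = 1 / S"
      using S_def S_nz by simp
    have "(y - G * (- y * C)) / (S * R) = y * (1 + G * C) / (S * R)"
      by (simp add: algebra_simps)
    also have "\<dots> = y / (S\<^sup>2 * R)"
      using \<open>1 + G * C = 1 / S\<close> by (simp add: power2_eq_square)
    finally show ?thesis
      using tendsto_mono[OF at_within_le_at tendsto_perturbed_quotient_error[OF SR_nz, of G y "- y * C"]]
      by (simp only: G_ind_perturbed[OF S_def SR_nz])
  qed
  show ?thesis
    unfolding G_io_eq_G_dir[OF R_nz]
    by (intro conjI conv_distr_at_0_AE_tendsto[OF prob] AE_I2 dir ind)
       (use meas in \<open>simp_all add: G_dir_def G_ind_def T_yr_def\<close>)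
qed

end
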